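(* Let $q$ be a positive integer and $\varepsilon\in(0,1]$ such that $q^\varepsilon$ is an integer. Then there is a function $g:\mathbb N\to\mathbb R$ with $g(n)=o(n)$ such that for every positive integer $n$, the tensor $\langle q,q^\varepsilon,q\rangle^{\otimes n}$ has a zeroing out which is an independent tensor with at least $q^{(1+\varepsilon)n-g(n)}$ nonzero coefficients.
   Context: A tensor over finite sets of formal variables $X,Y,Z$ is a trilinear form $\sum T_{xyz}\,xyz$ with field coefficients. $\langle n,m,k\rangle=\sum_{i=1}^n\sum_{j=1}^m\sum_{l=1}^k x_{ij}y_{jl}z_{li}$. $A^{\otimes n}$ denotes the $n$-fold tensor power: the tensor over $X^n,Y^n,Z^n$ whose coefficient on $(x^{(1)},\dots,x^{(n)})(y^{(1)},\dots,y^{(n)})(z^{(1)},\dots,z^{(n)})$ is $\prod_t A_{x^{(t)}y^{(t)}z^{(t)}}$. For tensors $A,B$ over $X,Y,Z$, $A$ is a zeroing out of $B$ if each $A_{xyz}\in\{B_{xyz},0\}$ and there are functions $a:X\to\mathbb Z_{\ge0}$, $b:Y\to\mathbb Z_{\ge0}$, $c:Z\to\mathbb Z_{\ge0}$ such that whenever $B_{xyz}\ne0$, $A_{xyz}\ne 0$ iff $a(x)+b(y)+c(z)=0$. A tensor is independent if any two distinct triples $(x,y,z),(x',y',z')$ with nonzero coefficients satisfy $x\ne x'$, $y\ne y'$ and $z\ne z'$. *)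

theory Defs
  imports Complex_Main "HOL-Library.Landau_Symbols"
begin

text \<open>A tensor over variable types 'x, 'y, 'z with coefficients in a field 'f is a
function giving the coefficient of each monomial x y z (zero outside its support).\<close>

type_synonym ('x, 'y, 'z, 'f) tensor = "'x \<Rightarrow> 'y \<Rightarrow> 'z \<Rightarrow> 'f"

text \<open>Matrix multiplication tensor <n,m,k> = sum over i<n, j<m, l<k of
x_(i,j) y_(j,l) z_(l,i).\<close>
definition mm_tensor :: "nat \<Rightarrow> nat \<Rightarrow> nat \<Rightarrow> (nat \<times> nat, nat \<times> nat, nat \<times> nat, 'f::field) tensor" where
  "mm_tensor n m k = (\<lambda>(i, j) (j', l) (l', i').
      if i < n \<and> j < m \<and> l < k \<and> j' = j \<and> l' = l \<and> i' = i then 1 else 0)"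

definition tensor_pow :: "('x, 'y, 'z, 'f::field) tensor \<Rightarrow> nat \<Rightarrow> ('x list, 'y list, 'z list, 'f) tensor" where
  "tensor_pow T n = (\<lambda>xs ys zs.
      if length xs = n \<and> length ys = n \<and> length zs = n
      then (\<Prod>t<n. T (xs ! t) (ys ! t) (zs ! t)) else 0)"

definition zeroing_out :: "('x, 'y, 'z, 'f::field) tensor \<Rightarrow> ('x, 'y, 'z, 'f) tensor \<Rightarrow> bool" where
  "zeroing_out A B \<longleftrightarrow>
     (\<forall>x y z. A x y z = B x y z \<or> A x y z = 0) \<and>
     (\<exists>a :: 'x \<Rightarrow> nat. \<exists>b :: 'y \<Rightarrow> nat. \<exists>c :: 'z \<Rightarrow> nat.
        \<forall>x y z. B x y z \<noteq> 0 \<longrightarrow> (A x y z \<noteq> 0 \<longleftrightarrow> a x + b y + c z = 0))"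

definition tensor_support :: "('x, 'y, 'z, 'f::field) tensor \<Rightarrow> ('x \<times> 'y \<times> 'z) set" where
  "tensor_support A = {(x, y, z). A x y z \<noteq> 0}"

definition independent_tensor :: "('x, 'y, 'z, 'f::field) tensor \<Rightarrow> bool" where
  "independent_tensor A \<longleftrightarrow>
     (\<forall>x y z x' y' z'. (x, y, z) \<in> tensor_support A \<longrightarrow> (x', y', z') \<in> tensor_support A \<longrightarrow>
        (x, y, z) \<noteq> (x', y', z') \<longrightarrow> x \<noteq> x' \<and> y \<noteq> y' \<and> z \<noteq> z')"

end

(*
  A set B of residues below K without three-term progressions and of size K^(1 - o(1)) (Behrend:
  the points of a most popular sphere in a cube, written in a base that prevents carries) gives the
  Ruzsa-Szemeredi triples (v + 3Ku, v + b, v + 2b + 3Ku) with u < U, v < K, b in B. Two coordinates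
  determine such a triple, and a triangle of pairs forces a progression in B, so the triples form an
  induced matching. Taking K ~ q^(eps n) and 3KU ~ q^n gives an induced matching of size
  q^((1 + eps) n - o(n)) in [q^n] x [q^(eps n)] x [q^n]. Encoded as monomials of <q, q^eps, q>^(x n), it
  is the support of the restriction of the tensor to the three projections of the matching: a zeroing
  out that is an independent tensor.
*)
theory Submission
  imports Defs "HOL-Library.FuncSet"
begin

lemma add_mult_eq_add_mult_cancel:
  fixes a a' c x x' :: nat
  assumes "a < c" "a' < c" "a + c * x = a' + c * x'"
  shows "a = a' \<and> x = x'"
proof -
  have "a = (a + c * x) mod c" "x = (a + c * x) div c"
    using assms(1) by simp_all
  moreover have "a' = (a' + c * x') mod c" "x' = (a' + c * x') div c"
    using assms(2) by simp_all
  ultimately show ?thesis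
    unfolding assms(3) by simp
qed

section \<open>Sets without three-term progressions\<close>

definition ap3_free :: "nat set \<Rightarrow> bool" where
  "ap3_free B \<longleftrightarrow> (\<forall>a\<in>B. \<forall>b\<in>B. \<forall>c\<in>B. a + b = 2 * c \<longrightarrow> a = b)"

definition from_digits :: "nat \<Rightarrow> nat \<Rightarrow> (nat \<Rightarrow> nat) \<Rightarrow> nat" where
  "from_digits D k f = (\<Sum>t<k. f t * D ^ t)"

lemma from_digits_add:
  "from_digits D k f + from_digits D k g = from_digits D k (\<lambda>t. f t + g t)"
  by (simp add: from_digits_def sum.distrib algebra_simps)

lemma from_digits_less:
  assumes "\<forall>t<k. f t < D"
  shows "from_digits D k f < D ^ k"
  using assms
proof (induction k)
  case 0
  then show ?case by (simp add: from_digits_def)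
next
  case (Suc k)
  have "from_digits D (Suc k) f = from_digits D k f + f k * D ^ k"
    by (simp add: from_digits_def)
  also have "\<dots> < D ^ k + f k * D ^ k"
    using Suc by simp
  also have "\<dots> = (f k + 1) * D ^ k"
    by simp
  also have "\<dots> \<le> D * D ^ k"
    using Suc.prems by (intro mult_right_mono) auto
  finally show ?case by simp
qed

lemma from_digits_eqD:
  assumes "\<forall>t<k. f t < D" "\<forall>t<k. g t < D" "from_digits D k f = from_digits D k g"
  shows "\<forall>t<k. f t = g t"
  using assms
proof (induction k)
  case 0
  then show ?case by simp
next
  case (Suc k)
  have low: "from_digits D k f < D ^ k" "from_digits D k g < D ^ k"
    using Suc.prems by (auto intro: from_digits_less)
  have "from_digits D k f + D ^ k * f k = from_digits D k g + D ^ k * g k"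
    using Suc.prems(3) by (simp add: from_digits_def mult.commute)
  then have "from_digits D k f = from_digits D k g" "f k = g k"
    using add_mult_eq_add_mult_cancel[OF low] by blast+
  moreover from this(1) have "\<forall>t<k. f t = g t"
    using Suc.prems(1,2) by (intro Suc.IH) simp_all
  ultimately show ?case
    by (simp add: less_Suc_eq)
qed

lemma inj_on_from_digits: "inj_on (from_digits D k) ({..<k} \<rightarrow>\<^sub>E {..<D})"
proof (rule inj_onI)
  fix f g
  assume "f \<in> {..<k} \<rightarrow>\<^sub>E {..<D}" "g \<in> {..<k} \<rightarrow>\<^sub>E {..<D}" "from_digits D k f = from_digits D k g"
  then have "\<forall>t<k. f t = g t"
    by (intro from_digits_eqD) (auto simp: PiE_def Pi_def)
  with \<open>f \<in> _\<close> \<open>g \<in> _\<close> show "f = g"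
    by (auto intro: PiE_ext)
qed

definition sphere_points :: "nat \<Rightarrow> nat \<Rightarrow> nat \<Rightarrow> (nat \<Rightarrow> nat) set" where
  "sphere_points k d r = {f \<in> {..<k} \<rightarrow>\<^sub>E {..<d}. (\<Sum>t<k. (f t)^2) = r}"

text \<open>Digits below \<open>d\<close> written in base \<open>2 d\<close> add without carries, so a three-term progression
  of encoded points is a componentwise progression \<open>x + y = 2 z\<close>; on a sphere the parallelogram law
  then forces \<open>x = y\<close>.\<close>
lemma ap3_free_from_digits_sphere: "ap3_free (from_digits (2 * d) k ` sphere_points k d r)"
  unfolding ap3_free_def
proof (intro ballI impI)
  fix a b c
  assume "a \<in> from_digits (2 * d) k ` sphere_points k d r" "b \<in> from_digits (2 * d) k ` sphere_points k d r"
    "c \<in> from_digits (2 * d) k ` sphere_points k d r" and abc: "a + b = 2 * c"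
  then obtain x y z where x: "x \<in> sphere_points k d r" "a = from_digits (2 * d) k x"
    and y: "y \<in> sphere_points k d r" "b = from_digits (2 * d) k y"
    and z: "z \<in> sphere_points k d r" "c = from_digits (2 * d) k z"
    by blast
  have digits: "\<forall>t<k. x t < d" "\<forall>t<k. y t < d" "\<forall>t<k. z t < d"
    using x y z by (auto simp: sphere_points_def)
  have small: "\<forall>t<k. x t + y t < 2 * d" "\<forall>t<k. z t + z t < 2 * d"
    using digits by (auto simp: mult_2 intro!: add_less_mono)
  have "from_digits (2 * d) k (\<lambda>t. x t + y t) = from_digits (2 * d) k (\<lambda>t. z t + z t)"
    using abc x y z by (simp flip: from_digits_add)
  then have "\<forall>t<k. x t + y t = z t + z t"
    by (rule from_digits_eqD[OF small])
  then have midpoint: "\<forall>t<k. int (x t) + int (y t) = 2 * int (z t)"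
    by (simp add: mult_2 flip: of_nat_add)
  have norms: "(\<Sum>t<k. int (x t)^2) = int r" "(\<Sum>t<k. int (y t)^2) = int r" "(\<Sum>t<k. int (z t)^2) = int r"
    using x y z by (auto simp: sphere_points_def simp flip: of_nat_power of_nat_sum)
  have "(\<Sum>t<k. (int (x t) - int (y t))^2)
      = (\<Sum>t<k. 2 * int (x t)^2 + 2 * int (y t)^2 - (int (x t) + int (y t))^2)"
    by (intro sum.cong) (simp_all add: power2_eq_square algebra_simps)
  also have "\<dots> = (\<Sum>t<k. 2 * int (x t)^2 + 2 * int (y t)^2 - 4 * int (z t)^2)"
    using midpoint by (intro sum.cong) simp_all
  also have "\<dots> = 0"
    using norms by (simp add: sum_subtractf sum.distrib flip: sum_distrib_left)
  finally have "\<forall>t<k. x t = y t"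
    by (subst (asm) sum_nonneg_eq_0_iff) auto
  then have "x = y"
    using x y by (auto simp: sphere_points_def intro: PiE_ext)
  then show "a = b"
    using x y by simp
qed

lemma exists_large_sphere: "\<exists>r. d ^ k \<le> card (sphere_points k d r) * (k * d^2 + 1)"
proof (rule ccontr)
  assume small: "\<nexists>r. d ^ k \<le> card (sphere_points k d r) * (k * d^2 + 1)"
  have "{..<k} \<rightarrow>\<^sub>E {..<d} \<subseteq> (\<Union>r\<le>k * d^2. sphere_points k d r)"
  proof
    fix f
    assume f: "f \<in> {..<k} \<rightarrow>\<^sub>E {..<d}"
    have "(\<Sum>t<k. (f t)^2) \<le> (\<Sum>t<k. d^2)"
      using f by (intro sum_mono power_mono) (auto simp: PiE_def Pi_def less_imp_le)
    then show "f \<in> (\<Union>r\<le>k * d^2. sphere_points k d r)"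
      using f by (auto simp: sphere_points_def)
  qed
  then have "card ({..<k} \<rightarrow>\<^sub>E {..<d}) \<le> card (\<Union>r\<le>k * d^2. sphere_points k d r)"
    by (intro card_mono) (auto simp: sphere_points_def finite_PiE)
  then have "d ^ k \<le> card (\<Union>r\<le>k * d^2. sphere_points k d r)"
    by (simp add: card_PiE)
  also have "\<dots> \<le> (\<Sum>r\<le>k * d^2. card (sphere_points k d r))"
    by (rule card_UN_le) simp
  finally have "d ^ k * (k * d^2 + 1) \<le> (\<Sum>r\<le>k * d^2. card (sphere_points k d r) * (k * d^2 + 1))"
    by (metis mult_le_mono1 sum_distrib_right)
  also have "\<dots> < (\<Sum>r\<le>k * d^2. d ^ k)"
    using small by (intro sum_strict_mono) (auto simp: not_le)
  finally show False
    by simp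
qed

lemma exists_power_bracket:
  fixes k K :: nat
  assumes "k \<ge> 1" "2 ^ k \<le> K"
  shows "\<exists>d\<ge>1. (2 * d) ^ k \<le> K \<and> K < (4 * d) ^ k"
proof -
  define P where "P d \<longleftrightarrow> (2 * d) ^ k \<le> K" for d :: nat
  have bounded: "d \<le> K" if "P d" for d
  proof -
    have "d \<le> 2 * d"
      by simp
    also have "\<dots> \<le> (2 * d) ^ k"
      using assms(1) self_le_power[of "2 * d" k] by (cases "d = 0") simp_all
    finally
    show ?thesis
      using that by (simp add: P_def)
  qed
  define d where "d = (GREATEST d. P d)"
  have "P 1"
    using assms(2) by (simp add: P_def)
  then have "P d" "1 \<le> d"
    unfolding d_def using bounded by (blast intro: GreatestI_nat Greatest_le_nat)+
  have "\<not> P (Suc d)"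
  proof
    assume "P (Suc d)"
    then have "Suc d \<le> d"
      unfolding d_def using bounded by (blast intro: Greatest_le_nat)
    then show False
      by simp
  qed
  then have "K < (2 * Suc d) ^ k"
    by (simp add: P_def)
  also have "\<dots> \<le> (4 * d) ^ k"
    using \<open>1 \<le> d\<close> by (intro power_mono) auto
  finally show ?thesis
    using \<open>P d\<close> \<open>1 \<le> d\<close> by (auto simp: P_def)
qed

lemma exists_large_ap3_free_in_cube:
  assumes "1 \<le> d" "2 \<le> k"
  shows "\<exists>B \<subseteq> {..<(2 * d) ^ k}. ap3_free B \<and> real d ^ (k - 2) \<le> real (card B) * (real k + 1)"
proof -
  obtain r where r: "d ^ k \<le> card (sphere_points k d r) * (k * d^2 + 1)"
    using exists_large_sphere by blast
  define B where "B = from_digits (2 * d) k ` sphere_points k d r"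
  have "sphere_points k d r \<subseteq> {..<k} \<rightarrow>\<^sub>E {..<d}"
    by (auto simp: sphere_points_def)
  also have "\<dots> \<subseteq> {..<k} \<rightarrow>\<^sub>E {..<2 * d}"
    by (intro PiE_mono) auto
  finally have sphere_sub: "sphere_points k d r \<subseteq> {..<k} \<rightarrow>\<^sub>E {..<2 * d}" .
  then have card_B: "card B = card (sphere_points k d r)"
    unfolding B_def by (intro card_image inj_on_subset[OF inj_on_from_digits sphere_sub])
  have "from_digits (2 * d) k f < (2 * d) ^ k" if "f \<in> sphere_points k d r" for f
    using that sphere_sub by (intro from_digits_less) (auto simp: PiE_iff)
  then have "B \<subseteq> {..<(2 * d) ^ k}"
    by (auto simp: B_def)
  have "real d ^ (k - 2) * real d ^ 2 = real d ^ k"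
    using assms(2) by (simp only: le_add_diff_inverse2 flip: power_add)
  also have "\<dots> \<le> real (card B) * (real k * real d ^ 2 + 1)"
  proof -
    have "real (d ^ k) \<le> real (card B * (k * d ^ 2 + 1))"
      using r card_B by (simp only: of_nat_le_iff)
    then show ?thesis
      by (simp add: algebra_simps)
  qed
  also have "\<dots> \<le> real (card B) * ((real k + 1) * real d ^ 2)"
    using assms(1) by (intro mult_left_mono) (auto simp: algebra_simps)
  finally have "real d ^ (k - 2) \<le> real (card B) * (real k + 1)"
    using assms(1) by (simp add: mult.assoc)
  with \<open>B \<subseteq> _\<close> show ?thesis
    using ap3_free_from_digits_sphere unfolding B_def by blast
qed

text \<open>Behrend's bound: apply the sphere construction with the largest \<open>d\<close> such that \<open>(2 d)\<^sup>k \<le> K\<close>.\<close>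
lemma ap3_free_subset_lower_bound:
  assumes k: "k \<ge> 2" and K: "K \<ge> 1"
  shows "\<exists>B \<subseteq> {..<K}. ap3_free B \<and>
    real K powr ((real k - 2) / real k) \<le> real (card B) * (real k + 1) * 4 ^ k"
proof (cases "K < 2 ^ k")
  case True
  have "real K powr ((real k - 2) / real k) \<le> real K powr 1"
    using K k by (intro powr_mono) auto
  also have "\<dots> = real K"
    by simp
  also have "\<dots> < real (2 ^ k)"
    using True by (simp only: of_nat_less_iff)
  also have "\<dots> \<le> 4 ^ k"
    by (simp add: power_mono)
  also have "\<dots> \<le> real (card {0::nat}) * (real k + 1) * 4 ^ k"
    by simp
  finally show ?thesis
    using K by (intro exI[of _ "{0}"]) (auto simp: ap3_free_def)
next
  case False
  then obtain d where d: "d \<ge> 1" "(2 * d) ^ k \<le> K" "K < (4 * d) ^ k"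
    using exists_power_bracket[of k K] k by auto
  then obtain B where B: "B \<subseteq> {..<K}" "ap3_free B" "real d ^ (k - 2) \<le> real (card B) * (real k + 1)"
    using exists_large_ap3_free_in_cube[OF d(1) k] by (meson lessThan_subset_iff order_trans)
  have "real K powr ((real k - 2) / real k) \<le> real ((4 * d) ^ k) powr ((real k - 2) / real k)"
    using d(3) k by (intro powr_mono2) (simp_all only: of_nat_le_iff less_imp_le, simp_all)
  also have "\<dots> = (real (4 * d) powr real k) powr ((real k - 2) / real k)"
    using d(1) by (subst powr_realpow) auto
  also have "\<dots> = real (4 * d) powr real (k - 2)"
    using k by (simp only: powr_powr) (simp add: of_nat_diff)
  also have "\<dots> = (4 * real d) ^ (k - 2)"
    using d(1) by (subst powr_realpow) auto
  also have "\<dots> \<le> 4 ^ k * real d ^ (k - 2)"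
    unfolding power_mult_distrib by (intro mult_right_mono power_increasing) auto
  also have "\<dots> \<le> 4 ^ k * (real (card B) * (real k + 1))"
    using B(3) by simp
  finally show ?thesis
    using B(1,2) by (intro exI[of _ B]) (auto simp: algebra_simps)
qed

lemma eventually_large_ap3_free:
  fixes \<delta> :: real
  assumes "\<delta> > 0"
  shows "eventually (\<lambda>K. \<exists>B \<subseteq> {..<K}. ap3_free B \<and> real K powr (1 - \<delta>) \<le> real (card B)) at_top"
proof -
  define k where "k = nat \<lceil>4 / \<delta>\<rceil> + 2"
  have k: "k \<ge> 2" "real k \<ge> 4 / \<delta>"
    unfolding k_def by linarith+
  define C :: real where "C = (real k + 1) * 4 ^ k"
  have "C \<ge> 1"
    unfolding C_def by (simp add: one_le_power order.trans[OF _ mult_right_mono[of 1]])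
  have "1 - \<delta> / 2 \<le> (real k - 2) / real k"
    using k assms by (simp add: field_simps)
  have "eventually (\<lambda>K. K \<ge> nat \<lceil>C powr (2 / \<delta>)\<rceil> + 1) at_top"
    by (rule eventually_ge_at_top)
  then show ?thesis
  proof (rule eventually_mono)
    fix K :: nat
    assume "K \<ge> nat \<lceil>C powr (2 / \<delta>)\<rceil> + 1"
    then have K: "K \<ge> 1" "real K \<ge> C powr (2 / \<delta>)"
      by linarith+
    then obtain B where B: "B \<subseteq> {..<K}" "ap3_free B"
      "real K powr ((real k - 2) / real k) \<le> real (card B) * C"
      using ap3_free_subset_lower_bound[of k K] k by (auto simp: C_def mult.assoc)
    have "C = (C powr (2 / \<delta>)) powr (\<delta> / 2)"
      using \<open>C \<ge> 1\<close> assms by (simp add: powr_powr)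
    also have "\<dots> \<le> real K powr (\<delta> / 2)"
      using K assms by (intro powr_mono2) auto
    finally have "real K powr (1 - \<delta>) * C \<le> real K powr (1 - \<delta>) * real K powr (\<delta> / 2)"
      by (intro mult_left_mono) auto
    also have "\<dots> = real K powr (1 - \<delta> / 2)"
      using K by (simp flip: powr_add)
    also have "\<dots> \<le> real K powr ((real k - 2) / real k)"
      using K \<open>1 - \<delta> / 2 \<le> _\<close> by (intro powr_mono) auto
    finally have "real K powr (1 - \<delta>) * C \<le> real (card B) * C"
      using B(3) by linarith
    then show "\<exists>B \<subseteq> {..<K}. ap3_free B \<and> real K powr (1 - \<delta>) \<le> real (card B)"
      using B \<open>C \<ge> 1\<close> by auto
  qed
qed

section \<open>Induced matchings\<close>

definition induced_matching :: "('a \<times> 'b \<times> 'c) set \<Rightarrow> bool" where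
  "induced_matching S \<longleftrightarrow>
    (\<forall>I J L I' J' L'. (I, J, L) \<in> S \<longrightarrow> (I', J', L') \<in> S \<longrightarrow>
       (I = I' \<and> J = J') \<or> (J = J' \<and> L = L') \<or> (L = L' \<and> I = I') \<longrightarrow> (I, J, L) = (I', J', L')) \<and>
    (\<forall>I J L I' J' L'. (I, J, L') \<in> S \<longrightarrow> (I', J, L) \<in> S \<longrightarrow> (I, J', L) \<in> S \<longrightarrow> (I, J, L) \<in> S)"

definition ruzsa_szemeredi_triples :: "nat \<Rightarrow> nat \<Rightarrow> nat set \<Rightarrow> (nat \<times> nat \<times> nat) set" where
  "ruzsa_szemeredi_triples K U B =
    (\<lambda>(u, v, b). (v + 3 * K * u, v + b, v + 2 * b + 3 * K * u)) ` ({..<U} \<times> {..<K} \<times> B)"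

lemma mem_ruzsa_szemeredi_triples:
  "(I, J, L) \<in> ruzsa_szemeredi_triples K U B \<longleftrightarrow>
    (\<exists>u v b. u < U \<and> v < K \<and> b \<in> B \<and> I = v + 3 * K * u \<and> J = v + b \<and> L = v + 2 * b + 3 * K * u)"
  by (auto simp: ruzsa_szemeredi_triples_def image_iff)

lemma card_ruzsa_szemeredi_triples: "card (ruzsa_szemeredi_triples K U B) = U * K * card B"
proof -
  have "inj_on (\<lambda>(u, v, b). (v + 3 * K * u, v + b, v + 2 * b + 3 * K * u)) ({..<U} \<times> {..<K} \<times> B)"
  proof (rule inj_onI)
    fix x y
    assume "x \<in> {..<U} \<times> {..<K} \<times> B" "y \<in> {..<U} \<times> {..<K} \<times> B" and
      eq: "(\<lambda>(u, v, b). (v + 3 * K * u, v + b, v + 2 * b + 3 * K * u)) x =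
        (\<lambda>(u, v, b). (v + 3 * K * u, v + b, v + 2 * b + 3 * K * u)) y"
    then obtain u v b u' v' b' where "x = (u, v, b)" "y = (u', v', b')" "v < K" "v' < K"
      by auto
    moreover from this eq have "v = v' \<and> u = u'"
      by (intro add_mult_eq_add_mult_cancel) auto
    ultimately show "x = y"
      using eq by simp
  qed
  then show ?thesis
    by (simp add: ruzsa_szemeredi_triples_def card_image card_cartesian_product)
qed

lemma ruzsa_szemeredi_triples_subset:
  assumes "B \<subseteq> {..<K}"
  shows "ruzsa_szemeredi_triples K U B \<subseteq> {..<3 * K * U} \<times> {..<2 * K} \<times> {..<3 * K * U}"
proof -
  have "I < 3 * K * U \<and> J < 2 * K \<and> L < 3 * K * U" if mem: "(I, J, L) \<in> ruzsa_szemeredi_triples K U B" for I J L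
  proof -
    obtain u v b where uvb: "u < U" "v < K" "b < K" and "I = v + 3 * K * u" "J = v + b"
      "L = v + 2 * b + 3 * K * u"
      using mem assms unfolding mem_ruzsa_szemeredi_triples by blast
    moreover have "3 * K * u + 3 * K \<le> 3 * K * U"
      using uvb(1) mult_le_mono2[of "Suc u" U "3 * K"] by simp
    ultimately show ?thesis
      by linarith
  qed
  then show ?thesis
    by auto
qed

text \<open>Reading \<open>I\<close> and \<open>L\<close> in base \<open>3 K\<close> recovers \<open>(u, v)\<close> and \<open>(u, v + 2 b)\<close>, so two
  coordinates determine the triple.\<close>
lemma ruzsa_szemeredi_triples_eq_if_two_coords_eq:
  assumes "B \<subseteq> {..<K}" "(I, J, L) \<in> ruzsa_szemeredi_triples K U B" "(I', J', L') \<in> ruzsa_szemeredi_triples K U B"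
    and "(I = I' \<and> J = J') \<or> (J = J' \<and> L = L') \<or> (L = L' \<and> I = I')"
  shows "(I, J, L) = (I', J', L')"
proof -
  obtain u v b u' v' b' where
    in_range: "v < K" "b < K" "v' < K" "b' < K" and
    coords: "I = v + 3 * K * u" "J = v + b" "L = v + 2 * b + 3 * K * u"
      "I' = v' + 3 * K * u'" "J' = v' + b'" "L' = v' + 2 * b' + 3 * K * u'"
    using assms(1-3) unfolding mem_ruzsa_szemeredi_triples by blast
  have I_eq: "v = v' \<and> u = u'" if "I = I'"
    using that coords in_range by (intro add_mult_eq_add_mult_cancel) auto
  have L_eq: "v + 2 * b = v' + 2 * b' \<and> u = u'" if "L = L'"
    using that coords in_range by (intro add_mult_eq_add_mult_cancel) auto
  from assms(4) have "u = u' \<and> v = v' \<and> b = b'"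
  proof (elim disjE conjE)
    assume "I = I'" "J = J'"
    with I_eq have "v = v'" "u = u'"
      by simp_all
    with \<open>J = J'\<close> show ?thesis
      using coords(2,5) by simp
  next
    assume "J = J'" "L = L'"
    with L_eq have "v + 2 * b = v' + 2 * b'" "u = u'"
      by simp_all
    with \<open>J = J'\<close> show ?thesis
      using coords(2,5) by linarith
  next
    assume "L = L'" "I = I'"
    then show ?thesis
      using I_eq L_eq by simp
  qed
  then show ?thesis
    using coords by simp
qed

text \<open>The triples through the three edges of a triangle come from \<open>b\<^sub>1, b\<^sub>2, b\<^sub>3 \<in> B\<close> with
  \<open>b\<^sub>1 + b\<^sub>2 = 2 b\<^sub>3\<close>.\<close>
lemma ruzsa_szemeredi_triples_triangle:
  assumes B: "B \<subseteq> {..<K}" "ap3_free B"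
    and "(I, J, L') \<in> ruzsa_szemeredi_triples K U B" "(I', J, L) \<in> ruzsa_szemeredi_triples K U B"
      "(I, J', L) \<in> ruzsa_szemeredi_triples K U B"
  shows "(I, J, L) \<in> ruzsa_szemeredi_triples K U B"
proof -
  obtain u\<^sub>1 v\<^sub>1 b\<^sub>1 u\<^sub>2 v\<^sub>2 b\<^sub>2 u\<^sub>3 v\<^sub>3 b\<^sub>3 where
    in_range: "u\<^sub>1 < U" "v\<^sub>1 < K" "b\<^sub>1 \<in> B" "v\<^sub>2 < K" "b\<^sub>2 \<in> B" "v\<^sub>3 < K" "b\<^sub>3 \<in> B" and
    coords: "I = v\<^sub>1 + 3 * K * u\<^sub>1" "J = v\<^sub>1 + b\<^sub>1" "J = v\<^sub>2 + b\<^sub>2" "L = v\<^sub>2 + 2 * b\<^sub>2 + 3 * K * u\<^sub>2"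
      "I = v\<^sub>3 + 3 * K * u\<^sub>3" "L = v\<^sub>3 + 2 * b\<^sub>3 + 3 * K * u\<^sub>3"
    using assms(3-5) unfolding mem_ruzsa_szemeredi_triples by blast
  have low_digits: "v < 3 * K" "v + 2 * b < 3 * K" if "v < K" "b \<in> B" for v b
    using that B(1) by auto
  have "v\<^sub>1 + 3 * K * u\<^sub>1 = v\<^sub>3 + 3 * K * u\<^sub>3"
    using coords(1,5) by simp
  then have "v\<^sub>1 = v\<^sub>3 \<and> u\<^sub>1 = u\<^sub>3"
    by (rule add_mult_eq_add_mult_cancel[rotated 2]) (use in_range low_digits in auto)
  have "v\<^sub>2 + 2 * b\<^sub>2 + 3 * K * u\<^sub>2 = v\<^sub>3 + 2 * b\<^sub>3 + 3 * K * u\<^sub>3"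
    using coords(4,6) by simp
  then have "v\<^sub>2 + 2 * b\<^sub>2 = v\<^sub>3 + 2 * b\<^sub>3 \<and> u\<^sub>2 = u\<^sub>3"
    by (rule add_mult_eq_add_mult_cancel[rotated 2]) (use in_range low_digits in auto)
  with \<open>v\<^sub>1 = v\<^sub>3 \<and> u\<^sub>1 = u\<^sub>3\<close> have "b\<^sub>1 + b\<^sub>2 = 2 * b\<^sub>3"
    using coords(2,3) by linarith
  moreover from this have "b\<^sub>1 = b\<^sub>2"
    using B(2) in_range unfolding ap3_free_def by blast
  ultimately have "b\<^sub>3 = b\<^sub>1"
    by simp
  with \<open>v\<^sub>1 = v\<^sub>3 \<and> u\<^sub>1 = u\<^sub>3\<close> show ?thesis
    using coords(1,2,6) in_range(1-3) unfolding mem_ruzsa_szemeredi_triples by auto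
qed

lemma induced_matching_ruzsa_szemeredi_triples:
  assumes "B \<subseteq> {..<K}" "ap3_free B"
  shows "induced_matching (ruzsa_szemeredi_triples K U B)"
  unfolding induced_matching_def
  using ruzsa_szemeredi_triples_eq_if_two_coords_eq[OF assms(1)] ruzsa_szemeredi_triples_triangle[OF assms]
  by blast

lemma exists_large_induced_matching:
  assumes "3 \<le> M" "M \<le> N" "B \<subseteq> {..<M div 3}" "ap3_free B"
  shows "\<exists>S \<subseteq> {..<N} \<times> {..<M} \<times> {..<N}. induced_matching S \<and> real N * real (card B) \<le> 6 * real (card S)"
proof -
  define K where "K = M div 3"
  define U where "U = N div (3 * K)"
  have K: "1 \<le> K" "3 * K \<le> M"
    using assms(1) by (auto simp: K_def)
  have "3 * K * U \<le> N"
    unfolding U_def by (metis div_times_less_eq_dividend mult.commute)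
  have "N mod (3 * K) < 3 * K"
    using K(1) by simp
  then have "N < U * (3 * K) + 3 * K"
    using div_mult_mod_eq[of N "3 * K"] unfolding U_def by linarith
  then have "N < 3 * K * U + 3 * K"
    by (simp add: mult.commute)
  with K assms(2) have "1 \<le> U"
    by (cases U) auto
  then have "3 * K \<le> 3 * K * U"
    by simp
  with \<open>N < 3 * K * U + 3 * K\<close> have "N \<le> 2 * (3 * K * U)"
    by linarith
  then have "N \<le> 6 * (U * K)"
    by (simp add: algebra_simps)
  define S where "S = ruzsa_szemeredi_triples K U B"
  have "S \<subseteq> {..<3 * K * U} \<times> {..<2 * K} \<times> {..<3 * K * U}"
    using assms(3) by (simp add: S_def K_def ruzsa_szemeredi_triples_subset)
  also have "\<dots> \<subseteq> {..<N} \<times> {..<M} \<times> {..<N}"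
    using \<open>3 * K * U \<le> N\<close> K by auto
  finally have "S \<subseteq> {..<N} \<times> {..<M} \<times> {..<N}" .
  moreover have "induced_matching S"
    using assms(3,4) by (simp add: S_def K_def induced_matching_ruzsa_szemeredi_triples)
  moreover have "real N * real (card B) \<le> 6 * real (card S)"
  proof -
    have "N * card B \<le> 6 * (U * K * card B)"
      using mult_le_mono1[OF \<open>N \<le> 6 * (U * K)\<close>, of "card B"] by (simp add: mult.assoc)
    then have "real (N * card B) \<le> real (6 * card S)"
      by (simp only: S_def card_ruzsa_szemeredi_triples of_nat_le_iff)
    then show ?thesis
      by simp
  qed
  ultimately show ?thesis
    by blast
qed

lemma induced_matching_image:
  assumes "induced_matching S" "S \<subseteq> A \<times> B \<times> C" "inj_on f A" "inj_on g B" "inj_on h C"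
  shows "induced_matching (map_prod f (map_prod g h) ` S)"
proof -
  have eq_iff: "f a = f a' \<longleftrightarrow> a = a'" "g b = g b' \<longleftrightarrow> b = b'" "h c = h c' \<longleftrightarrow> c = c'"
    if "(a, b, c) \<in> S" "(a', b', c') \<in> S" for a b c a' b' c'
    using that assms(2-5) by (auto dest: inj_onD)
  show ?thesis
    unfolding induced_matching_def
  proof (intro conjI allI impI; clarsimp)
    fix a b c a' b' c'
    assume "(a, b, c) \<in> S" "(a', b', c') \<in> S"
      "f a = f a' \<and> g b = g b' \<or> g b = g b' \<and> h c = h c' \<or> h c = h c' \<and> f a = f a'"
    moreover from this have "a = a' \<and> b = b' \<or> b = b' \<and> c = c' \<or> c = c' \<and> a = a'"
      using eq_iff[of a b c a' b' c'] by simp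
    ultimately have "(a, b, c) = (a', b', c')"
      using assms(1) unfolding induced_matching_def by blast
    then show "f a = f a' \<and> g b = g b' \<and> h c = h c'"
      by simp
  next
    fix a b c a' b' c' a'' b'' c''
    assume "(a, b, c) \<in> S" "(a', b', c') \<in> S" "(a'', b'', c'') \<in> S"
      "g b = g b'" "f a = f a''" "h c' = h c''"
    moreover from this have "b = b'" "a = a''" "c' = c''"
      using eq_iff by blast+
    ultimately have "(a, b, c') \<in> S"
      using assms(1) unfolding induced_matching_def by blast
    then show "(f a'', g b', h c'') \<in> map_prod f (map_prod g h) ` S"
      using \<open>b = b'\<close> \<open>a = a''\<close> \<open>c' = c''\<close> by force
  qed
qed

section \<open>Zeroing out powers of matrix multiplication tensors\<close>

definition digit_lists :: "nat \<Rightarrow> nat \<Rightarrow> nat list set" where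
  "digit_lists d n = {xs. set xs \<subseteq> {..<d} \<and> length xs = n}"

lemma finite_digit_lists: "finite (digit_lists d n)"
  and card_digit_lists: "card (digit_lists d n) = d ^ n"
  using finite_lists_length_eq[of "{..<d}" n] card_lists_length_eq[of "{..<d}" n]
  by (simp_all add: digit_lists_def)

lemma exists_induced_matching_digit_lists:
  assumes "S \<subseteq> {..<a ^ n} \<times> {..<b ^ n} \<times> {..<c ^ n}" "induced_matching S"
  shows "\<exists>S' \<subseteq> digit_lists a n \<times> digit_lists b n \<times> digit_lists c n. induced_matching S' \<and> card S' = card S"
proof -
  have "\<exists>f. bij_betw f {..<d ^ n} (digit_lists d n)" for d
    by (intro finite_same_card_bij) (simp_all add: finite_digit_lists card_digit_lists)
  then obtain f g h where bij: "bij_betw f {..<a ^ n} (digit_lists a n)"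
    "bij_betw g {..<b ^ n} (digit_lists b n)" "bij_betw h {..<c ^ n} (digit_lists c n)"
    by meson
  let ?F = "map_prod f (map_prod g h)"
  have inj: "inj_on ?F ({..<a ^ n} \<times> {..<b ^ n} \<times> {..<c ^ n})"
    using bij by (intro map_prod_inj_on) (auto simp: bij_betw_def)
  have "?F ` S \<subseteq> digit_lists a n \<times> digit_lists b n \<times> digit_lists c n"
    using assms(1) by (auto intro!: bij_betw_apply[OF bij(1)] bij_betw_apply[OF bij(2)] bij_betw_apply[OF bij(3)])
  moreover have "induced_matching (?F ` S)"
    using assms bij by (intro induced_matching_image) (auto simp: bij_betw_def)
  moreover have "card (?F ` S) = card S"
    using inj_on_subset[OF inj assms(1)] by (rule card_image)
  ultimately show ?thesis
    by blast
qed

lemma zip_eq_zip_iff: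
  assumes "length xs = length ys" "length xs' = length ys'"
  shows "zip xs ys = zip xs' ys' \<longleftrightarrow> xs = xs' \<and> ys = ys'"
  using assms by (metis map_fst_zip map_snd_zip)

text \<open>The triple \<open>(I, J, L)\<close> of index lists stands for the monomial
  \<open>\<Prod>\<^sub>t x\<^bsub>I\<^sub>t J\<^sub>t\<^esub> y\<^bsub>J\<^sub>t L\<^sub>t\<^esub> z\<^bsub>L\<^sub>t I\<^sub>t\<^esub>\<close> of a power of a matrix multiplication tensor.\<close>
definition mm_monomial ::
    "nat list \<times> nat list \<times> nat list \<Rightarrow> (nat \<times> nat) list \<times> (nat \<times> nat) list \<times> (nat \<times> nat) list" where
  "mm_monomial = (\<lambda>(I, J, L). (zip I J, zip J L, zip L I))"

lemma tensor_pow_mm_tensor: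
  "tensor_pow (mm_tensor a b c) n xs ys zs =
    (if (xs, ys, zs) \<in> mm_monomial ` (digit_lists a n \<times> digit_lists b n \<times> digit_lists c n) then 1 else (0::'f::field))"
proof -
  let ?D = "digit_lists a n \<times> digit_lists b n \<times> digit_lists c n"
  have one: "tensor_pow (mm_tensor a b c) n xs ys zs = (1::'f)" if "(xs, ys, zs) \<in> mm_monomial ` ?D"
    using that by (auto simp: mm_monomial_def digit_lists_def tensor_pow_def mm_tensor_def subset_iff)
  have "(xs, ys, zs) \<in> mm_monomial ` ?D" if nonzero: "tensor_pow (mm_tensor a b c) n xs ys zs \<noteq> (0::'f)"
  proof -
    from nonzero have len: "length xs = n" "length ys = n" "length zs = n"
      by (auto simp: tensor_pow_def split: if_splits)
    with nonzero have "\<forall>t<n. mm_tensor a b c (xs ! t) (ys ! t) (zs ! t) \<noteq> (0::'f)"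
      by (simp add: tensor_pow_def prod_zero_iff)
    then have entry: "fst (xs ! t) < a \<and> snd (xs ! t) < b \<and> fst (zs ! t) < c \<and>
        ys ! t = (snd (xs ! t), fst (zs ! t)) \<and> zs ! t = (fst (zs ! t), fst (xs ! t))" if "t < n" for t
      using that by (cases "xs ! t"; cases "ys ! t"; cases "zs ! t") (auto simp: mm_tensor_def split: if_splits)
    define I J L where "I = map fst xs" "J = map snd xs" "L = map fst zs"
    have "(I, J, L) \<in> ?D"
      using entry len by (auto simp: I_J_L_def digit_lists_def set_conv_nth)
    moreover have "(xs, ys, zs) = mm_monomial (I, J, L)"
      using entry len by (auto simp: I_J_L_def mm_monomial_def zip_map_fst_snd intro!: nth_equalityI)
    ultimately show ?thesis
      by blast
  qed
  with one show ?thesis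
    by auto
qed

lemma zeroing_out_restrict:
  "zeroing_out (\<lambda>x y z. if x \<in> X \<and> y \<in> Y \<and> z \<in> Z then T x y z else 0) T"
  unfolding zeroing_out_def
  by (intro conjI allI exI[of _ "\<lambda>x. if x \<in> X then 0 else 1"] exI[of _ "\<lambda>y. if y \<in> Y then 0 else 1"]
      exI[of _ "\<lambda>z. if z \<in> Z then 0 else 1"]) auto

lemma tensor_support_restrict_projections:
  assumes "M \<subseteq> tensor_support T"
    and "\<And>x y z. (x, y, z) \<in> tensor_support T \<Longrightarrow> x \<in> fst ` M \<Longrightarrow> y \<in> fst ` snd ` M \<Longrightarrow> z \<in> snd ` snd ` M \<Longrightarrow>
      (x, y, z) \<in> M"
  shows "tensor_support (\<lambda>x y z. if x \<in> fst ` M \<and> y \<in> fst ` snd ` M \<and> z \<in> snd ` snd ` M then T x y z else 0) = M"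
proof -
  have "(if x \<in> fst ` M \<and> y \<in> fst ` snd ` M \<and> z \<in> snd ` snd ` M then T x y z else 0) \<noteq> 0 \<longleftrightarrow> (x, y, z) \<in> M"
    for x y z
  proof
    assume "(if x \<in> fst ` M \<and> y \<in> fst ` snd ` M \<and> z \<in> snd ` snd ` M then T x y z else 0) \<noteq> 0"
    then have "(x, y, z) \<in> tensor_support T" "x \<in> fst ` M" "y \<in> fst ` snd ` M" "z \<in> snd ` snd ` M"
      by (simp_all add: tensor_support_def split: if_splits)
    then show "(x, y, z) \<in> M"
      by (rule assms(2))
  next
    assume "(x, y, z) \<in> M"
    moreover from this have "x \<in> fst ` M" "y \<in> fst ` snd ` M" "z \<in> snd ` snd ` M"
      by force+
    ultimately show "(if x \<in> fst ` M \<and> y \<in> fst ` snd ` M \<and> z \<in> snd ` snd ` M then T x y z else 0) \<noteq> 0"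
      using assms(1) by (auto simp: tensor_support_def)
  qed
  then show ?thesis
    by (auto simp: tensor_support_def)
qed

lemma inj_on_mm_monomial: "inj_on mm_monomial (digit_lists a n \<times> digit_lists b n \<times> digit_lists c n)"
proof (rule inj_onI)
  fix p p'
  assume "p \<in> digit_lists a n \<times> digit_lists b n \<times> digit_lists c n"
    "p' \<in> digit_lists a n \<times> digit_lists b n \<times> digit_lists c n" "mm_monomial p = mm_monomial p'"
  moreover obtain I J L I' J' L' where "p = (I, J, L)" "p' = (I', J', L')"
    by (metis prod_cases3)
  ultimately have "length I = n" "length J = n" "length L = n" "length I' = n" "length J' = n" "length L' = n"
    and "mm_monomial (I, J, L) = mm_monomial (I', J', L')"
    by (auto simp: digit_lists_def)
  then show "p = p'"
    using \<open>p = (I, J, L)\<close> \<open>p' = (I', J', L')\<close> by (simp add: mm_monomial_def zip_eq_zip_iff)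
qed

lemma independent_tensor_mm_monomial_image:
  assumes "S \<subseteq> digit_lists a n \<times> digit_lists b n \<times> digit_lists c n" "induced_matching S"
    and "tensor_support A = mm_monomial ` S"
  shows "independent_tensor A"
  unfolding independent_tensor_def assms(3)
proof (intro allI impI)
  fix xs ys zs xs' ys' zs'
  assume "(xs, ys, zs) \<in> mm_monomial ` S" "(xs', ys', zs') \<in> mm_monomial ` S" and
    ne: "(xs, ys, zs) \<noteq> (xs', ys', zs')"
  then obtain I J L I' J' L' where in_S: "(I, J, L) \<in> S" "(I', J', L') \<in> S" and
    coords: "xs = zip I J" "ys = zip J L" "zs = zip L I" "xs' = zip I' J'" "ys' = zip J' L'" "zs' = zip L' I'"
    by (auto simp: mm_monomial_def)
  moreover from ne coords have "(I, J, L) \<noteq> (I', J', L')"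
    by auto
  ultimately have "\<not> (I = I' \<and> J = J' \<or> J = J' \<and> L = L' \<or> L = L' \<and> I = I')"
    using assms(2) unfolding induced_matching_def by blast
  moreover have "length I = n" "length J = n" "length L = n" "length I' = n" "length J' = n" "length L' = n"
    using in_S assms(1) by (auto simp: digit_lists_def)
  ultimately show "xs \<noteq> xs' \<and> ys \<noteq> ys' \<and> zs \<noteq> zs'"
    using coords by (simp add: zip_eq_zip_iff)
qed

text \<open>Restricting to the projections of \<open>S\<close> is a zeroing out; the triangle condition of an induced
  matching says that it keeps no monomial outside \<open>S\<close>.\<close>
lemma exists_independent_zeroing_out:
  assumes S: "S \<subseteq> digit_lists a n \<times> digit_lists b n \<times> digit_lists c n" and "induced_matching S"
  shows "\<exists>A :: (nat \<times> nat) list \<Rightarrow> (nat \<times> nat) list \<Rightarrow> (nat \<times> nat) list \<Rightarrow> 'f::field.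
    zeroing_out A (tensor_pow (mm_tensor a b c) n) \<and> independent_tensor A \<and> card (tensor_support A) = card S"
proof -
  let ?D = "digit_lists a n \<times> digit_lists b n \<times> digit_lists c n"
  let ?T = "tensor_pow (mm_tensor a b c) n :: _ \<Rightarrow> _ \<Rightarrow> _ \<Rightarrow> 'f"
  define M where "M = mm_monomial ` S"
  define A where "A = (\<lambda>x y z. if x \<in> fst ` M \<and> y \<in> fst ` snd ` M \<and> z \<in> snd ` snd ` M then ?T x y z else 0)"
  have len: "length I = n" "length J = n" "length L = n" if "(I, J, L) \<in> ?D" for I J L
    using that by (auto simp: digit_lists_def)
  have "M \<subseteq> tensor_support ?T"
    using S by (auto simp: M_def tensor_support_def tensor_pow_mm_tensor)
  moreover have "(xs, ys, zs) \<in> M"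
    if supp: "(xs, ys, zs) \<in> tensor_support ?T"
      and proj: "xs \<in> fst ` M" "ys \<in> fst ` snd ` M" "zs \<in> snd ` snd ` M" for xs ys zs
  proof -
    have "(xs, ys, zs) \<in> mm_monomial ` ?D"
      using supp by (simp add: tensor_support_def tensor_pow_mm_tensor split: if_splits)
    then obtain p where "p \<in> ?D" "(xs, ys, zs) = mm_monomial p"
      by (rule imageE)
    moreover obtain I J L where "p = (I, J, L)"
      by (cases p) auto
    ultimately have "(I, J, L) \<in> ?D" and IJL: "xs = zip I J" "ys = zip J L" "zs = zip L I"
      by (simp_all add: mm_monomial_def)
    obtain I\<^sub>1 J\<^sub>1 L\<^sub>1 I\<^sub>2 J\<^sub>2 L\<^sub>2 I\<^sub>3 J\<^sub>3 L\<^sub>3 where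
      in_S: "(I\<^sub>1, J\<^sub>1, L\<^sub>1) \<in> S" "(I\<^sub>2, J\<^sub>2, L\<^sub>2) \<in> S" "(I\<^sub>3, J\<^sub>3, L\<^sub>3) \<in> S" and
      "xs = zip I\<^sub>1 J\<^sub>1" "ys = zip J\<^sub>2 L\<^sub>2" "zs = zip L\<^sub>3 I\<^sub>3"
      using proj by (auto simp: M_def mm_monomial_def)
    moreover have "(I\<^sub>1, J\<^sub>1, L\<^sub>1) \<in> ?D" "(I\<^sub>2, J\<^sub>2, L\<^sub>2) \<in> ?D" "(I\<^sub>3, J\<^sub>3, L\<^sub>3) \<in> ?D"
      using in_S S by blast+
    ultimately have "I\<^sub>1 = I \<and> J\<^sub>1 = J" "J\<^sub>2 = J \<and> L\<^sub>2 = L" "L\<^sub>3 = L \<and> I\<^sub>3 = I"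
      using IJL len \<open>(I, J, L) \<in> ?D\<close> by (auto simp: zip_eq_zip_iff)
    with in_S have "(I, J, L) \<in> S"
      using \<open>induced_matching S\<close> unfolding induced_matching_def by blast
    then show ?thesis
      using IJL by (force simp: M_def mm_monomial_def)
  qed
  ultimately have support: "tensor_support A = M"
    unfolding A_def by (rule tensor_support_restrict_projections)
  have "zeroing_out A ?T"
    unfolding A_def by (rule zeroing_out_restrict)
  moreover have "independent_tensor A"
    using S \<open>induced_matching S\<close> support unfolding M_def by (rule independent_tensor_mm_monomial_image)
  moreover have "card (tensor_support A) = card S"
    unfolding support M_def using inj_on_subset[OF inj_on_mm_monomial S] by (rule card_image)
  ultimately show ?thesis
    by blast
qed

section \<open>Asymptotics\<close>

definition max_induced_matching :: "nat \<Rightarrow> nat \<Rightarrow> nat" where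
  "max_induced_matching N M = Max (card ` {S. S \<subseteq> {..<N} \<times> {..<M} \<times> {..<N} \<and> induced_matching S})"

lemma finite_induced_matchings:
  fixes N M :: nat
  shows "finite {S. S \<subseteq> {..<N} \<times> {..<M} \<times> {..<N} \<and> induced_matching S}"
  by (rule finite_subset[of _ "Pow ({..<N} \<times> {..<M} \<times> {..<N})"]) auto

lemma max_induced_matching_attained:
  "\<exists>S \<subseteq> {..<N} \<times> {..<M} \<times> {..<N}. induced_matching S \<and> card S = max_induced_matching N M"
proof -
  have "{} \<in> {S. S \<subseteq> {..<N} \<times> {..<M} \<times> {..<N} \<and> induced_matching S}"
    by (simp add: induced_matching_def)
  then have "max_induced_matching N M \<in> card ` {S. S \<subseteq> {..<N} \<times> {..<M} \<times> {..<N} \<and> induced_matching S}"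
    unfolding max_induced_matching_def using finite_induced_matchings by (intro Max_in) auto
  then obtain S where "S \<subseteq> {..<N} \<times> {..<M} \<times> {..<N}" "induced_matching S" "card S = max_induced_matching N M"
    by auto
  then show ?thesis
    by blast
qed

lemma card_le_max_induced_matching:
  assumes "S \<subseteq> {..<N} \<times> {..<M} \<times> {..<N}" "induced_matching S"
  shows "card S \<le> max_induced_matching N M"
  unfolding max_induced_matching_def using assms finite_induced_matchings by (intro Max_ge) auto

lemma one_le_max_induced_matching:
  assumes "0 < N" "0 < M"
  shows "1 \<le> max_induced_matching N M"
  using card_le_max_induced_matching[of "{(0, 0, 0)}" N M] assms by (simp add: induced_matching_def)

lemma filterlim_power_div_at_top:
  fixes m d :: nat
  assumes "2 \<le> m" "0 < d"
  shows "filterlim (\<lambda>n. m ^ n div d) at_top at_top"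
  unfolding filterlim_at_top
proof
  fix Z
  show "eventually (\<lambda>n. Z \<le> m ^ n div d) at_top"
    using eventually_ge_at_top[of "d * Z"]
  proof (rule eventually_mono)
    fix n
    assume "d * Z \<le> n"
    also have "n < 2 ^ n"
      by (rule less_exp)
    also have "\<dots> \<le> m ^ n"
      using assms by (intro power_mono) auto
    finally have "d * Z \<le> m ^ n"
      by simp
    then show "Z \<le> m ^ n div d"
      using assms(2) by (simp add: less_eq_div_iff_mult_less_eq mult.commute)
  qed
qed

lemma eventually_large_ap3_free_power:
  fixes m :: nat and \<delta> :: real
  assumes "2 \<le> m" "0 < \<delta>" "\<delta> \<le> 1"
  shows "eventually (\<lambda>n. \<exists>B \<subseteq> {..<m ^ n div 3}. ap3_free B \<and> real (m ^ n) powr (1 - \<delta>) \<le> 6 * real (card B))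
    at_top"
proof -
  have "filterlim (\<lambda>n. m ^ n div 3) at_top at_top"
    using assms(1) by (rule filterlim_power_div_at_top) simp
  from eventually_compose_filterlim[OF eventually_large_ap3_free[OF assms(2)] this]
    eventually_ge_at_top[of 2]
  show ?thesis
  proof (rule eventually_elim2)
    fix n :: nat
    define K where "K = m ^ n div 3"
    assume "\<exists>B \<subseteq> {..<m ^ n div 3}. ap3_free B \<and> real (m ^ n div 3) powr (1 - \<delta>) \<le> real (card B)" "2 \<le> n"
    then obtain B where B: "B \<subseteq> {..<K}" "ap3_free B" "real K powr (1 - \<delta>) \<le> real (card B)"
      by (auto simp: K_def)
    have "4 \<le> m ^ 2"
      using power_mono[OF assms(1), of 2] by simp
    also have "\<dots> \<le> m ^ n"
      using assms(1) \<open>2 \<le> n\<close> by (intro power_increasing) auto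
    finally have "m ^ n \<le> 6 * K"
      unfolding K_def by linarith
    then have "real (m ^ n) \<le> 6 * real K"
      by (metis of_nat_le_iff of_nat_mult of_nat_numeral)
    then have "real (m ^ n) powr (1 - \<delta>) \<le> (6 * real K) powr (1 - \<delta>)"
      using assms(3) by (intro powr_mono2) simp_all
    also have "\<dots> = 6 powr (1 - \<delta>) * real K powr (1 - \<delta>)"
      by (simp add: powr_mult)
    also have "\<dots> \<le> 6 * real (card B)"
      using B(3) assms(2) powr_mono[of "1 - \<delta>" 1 6] by (intro mult_mono) auto
    finally show "\<exists>B \<subseteq> {..<m ^ n div 3}. ap3_free B \<and> real (m ^ n) powr (1 - \<delta>) \<le> 6 * real (card B)"
      using B(1,2) by (auto simp: K_def)
  qed
qed

lemma eventually_large_induced_matching: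
  fixes q m :: nat and \<delta> :: real
  assumes "2 \<le> m" "m \<le> q" "0 < \<delta>" "\<delta> \<le> 1"
  shows "eventually (\<lambda>n. \<exists>S \<subseteq> {..<q ^ n} \<times> {..<m ^ n} \<times> {..<q ^ n}. induced_matching S \<and>
    real (q ^ n) * real (m ^ n) powr (1 - \<delta>) \<le> 36 * real (card S)) at_top"
  using eventually_large_ap3_free_power[OF assms(1,3,4)] eventually_ge_at_top[of 2]
proof (rule eventually_elim2)
  fix n :: nat
  assume "\<exists>B \<subseteq> {..<m ^ n div 3}. ap3_free B \<and> real (m ^ n) powr (1 - \<delta>) \<le> 6 * real (card B)"
  then obtain B where B: "B \<subseteq> {..<m ^ n div 3}" "ap3_free B" "real (m ^ n) powr (1 - \<delta>) \<le> 6 * real (card B)"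
    by blast
  assume "2 \<le> n"
  have "3 \<le> m ^ 2"
    using power_mono[OF assms(1), of 2] by simp
  also have "\<dots> \<le> m ^ n"
    using assms(1) \<open>2 \<le> n\<close> by (intro power_increasing) auto
  finally have "3 \<le> m ^ n" .
  moreover have "m ^ n \<le> q ^ n"
    using assms(2) by (rule power_mono) simp
  ultimately obtain S where S: "S \<subseteq> {..<q ^ n} \<times> {..<m ^ n} \<times> {..<q ^ n}" "induced_matching S"
    "real (q ^ n) * real (card B) \<le> 6 * real (card S)"
    using exists_large_induced_matching[OF _ _ B(1,2)] by blast
  have "real (q ^ n) * real (m ^ n) powr (1 - \<delta>) \<le> real (q ^ n) * (6 * real (card B))"
    using B(3) by (intro mult_left_mono) auto
  also have "\<dots> \<le> 36 * real (card S)"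
    using mult_left_mono[OF S(3), of 6] by (simp add: algebra_simps)
  finally show "\<exists>S \<subseteq> {..<q ^ n} \<times> {..<m ^ n} \<times> {..<q ^ n}. induced_matching S \<and>
    real (q ^ n) * real (m ^ n) powr (1 - \<delta>) \<le> 36 * real (card S)"
    using S(1,2) by blast
qed

lemma eventually_max_induced_matching_ge:
  fixes q m :: nat and \<epsilon> C :: real
  assumes m: "2 \<le> m" "m \<le> q" "real m = real q powr \<epsilon>" and "\<epsilon> \<le> 1" "0 < C"
  shows "eventually (\<lambda>n. real q powr ((1 + \<epsilon>) * n - C * n) \<le> real (max_induced_matching (q ^ n) (m ^ n))) at_top"
proof -
  define \<delta> where "\<delta> = min (C / 2) 1"
  have \<delta>: "0 < \<delta>" "\<delta> \<le> 1" "\<epsilon> * \<delta> \<le> C / 2"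
    using \<open>0 < C\<close> \<open>\<epsilon> \<le> 1\<close> mult_right_mono[OF \<open>\<epsilon> \<le> 1\<close>, of \<delta>] by (auto simp: \<delta>_def)
  have "q \<ge> 2"
    using m by simp
  from eventually_large_induced_matching[OF m(1,2) \<delta>(1,2)] eventually_ge_at_top[of "nat \<lceil>12 / C\<rceil>"]
  show ?thesis
  proof (rule eventually_elim2)
    fix n :: nat
    assume "\<exists>S \<subseteq> {..<q ^ n} \<times> {..<m ^ n} \<times> {..<q ^ n}. induced_matching S \<and>
      real (q ^ n) * real (m ^ n) powr (1 - \<delta>) \<le> 36 * real (card S)"
    then obtain S where S: "S \<subseteq> {..<q ^ n} \<times> {..<m ^ n} \<times> {..<q ^ n}" "induced_matching S"
      "real (q ^ n) * real (m ^ n) powr (1 - \<delta>) \<le> 36 * real (card S)"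
      by blast
    assume "nat \<lceil>12 / C\<rceil> \<le> n"
    then have "12 \<le> C * n"
      using \<open>0 < C\<close> by (simp add: divide_le_eq mult.commute)
    moreover have "\<epsilon> * n * \<delta> \<le> C / 2 * n"
      using mult_right_mono[OF \<delta>(3), of "real n"] by (simp add: algebra_simps)
    ultimately have "6 \<le> C * n - \<epsilon> * n * \<delta>"
      by linarith
    have "(36::real) \<le> 2 powr 6"
      using powr_realpow[of 2 6] by simp
    also have "\<dots> \<le> real q powr 6"
      using \<open>q \<ge> 2\<close> by (intro powr_mono2) auto
    also have "\<dots> \<le> real q powr (C * n - \<epsilon> * n * \<delta>)"
      using \<open>q \<ge> 2\<close> \<open>6 \<le> C * n - \<epsilon> * n * \<delta>\<close> by (intro powr_mono) auto
    finally have "real q powr ((1 + \<epsilon>) * n - C * n) * 36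
        \<le> real q powr ((1 + \<epsilon>) * n - C * n) * real q powr (C * n - \<epsilon> * n * \<delta>)"
      by (intro mult_left_mono) auto
    also have "\<dots> = real q powr n * (real q powr (\<epsilon> * n)) powr (1 - \<delta>)"
      by (simp add: powr_powr flip: powr_add) (simp add: algebra_simps)
    also have "\<dots> = real (q ^ n) * real (m ^ n) powr (1 - \<delta>)"
      using \<open>q \<ge> 2\<close> m(3) by (simp add: powr_realpow powr_powr flip: powr_realpow)
    also have "\<dots> \<le> 36 * real (max_induced_matching (q ^ n) (m ^ n))"
      using S(3) card_le_max_induced_matching[OF S(1,2)] by simp
    finally show "real q powr ((1 + \<epsilon>) * n - C * n) \<le> real (max_induced_matching (q ^ n) (m ^ n))"
      by linarith
  qed
qed

lemma exists_independent_zeroing_out_max_induced_matching: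
  "\<exists>A :: (nat \<times> nat) list \<Rightarrow> (nat \<times> nat) list \<Rightarrow> (nat \<times> nat) list \<Rightarrow> 'f::field.
    zeroing_out A (tensor_pow (mm_tensor a b a) n) \<and> independent_tensor A \<and>
    card (tensor_support A) = max_induced_matching (a ^ n) (b ^ n)"
proof -
  obtain S where "S \<subseteq> {..<a ^ n} \<times> {..<b ^ n} \<times> {..<a ^ n}" "induced_matching S"
    "card S = max_induced_matching (a ^ n) (b ^ n)"
    using max_induced_matching_attained by blast
  moreover from this obtain S' where "S' \<subseteq> digit_lists a n \<times> digit_lists b n \<times> digit_lists a n"
    "induced_matching S'" "card S' = card S"
    using exists_induced_matching_digit_lists by metis
  ultimately show ?thesis
    using exists_independent_zeroing_out by metis
qed

lemma exists_little_o_exponent_loss: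
  fixes a b :: real and f :: "nat \<Rightarrow> real"
  assumes "1 < b" "\<And>n. 1 \<le> f n"
    and "\<And>C. 0 < C \<Longrightarrow> eventually (\<lambda>n. b powr (a * n - C * n) \<le> f n) at_top"
  shows "\<exists>g. g \<in> o(\<lambda>n. real n) \<and> (\<forall>n. b powr (a * n - g n) \<le> f n)"
proof -
  define g where "g n = max 0 (a * n - log b (f n))" for n
  have "b powr (a * n - g n) \<le> f n" for n
  proof -
    have "b powr (a * n - g n) \<le> b powr (log b (f n))"
      using assms(1) by (intro powr_mono) (auto simp: g_def)
    also have "\<dots> = f n"
      using assms(1) assms(2)[of n] by simp
    finally show ?thesis .
  qed
  moreover have "g \<in> o(\<lambda>n. real n)"
  proof (rule landau_o.smallI)
    fix C :: real
    assume "0 < C"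
    show "eventually (\<lambda>n. norm (g n) \<le> C * norm (real n)) at_top"
      using assms(3)[OF \<open>0 < C\<close>]
    proof (rule eventually_mono)
      fix n
      assume "b powr (a * n - C * n) \<le> f n"
      then have "a * n - C * n \<le> log b (f n)"
        using assms(1) assms(2)[of n] by (simp add: le_log_iff)
      then show "norm (g n) \<le> C * norm (real n)"
        using \<open>0 < C\<close> by (simp add: g_def)
    qed
  qed
  ultimately show ?thesis
    by blast
qed

lemma exists_little_o_max_induced_matching:
  fixes q m :: nat and \<epsilon> :: real
  assumes "0 < q" "0 < \<epsilon>" "\<epsilon> \<le> 1" "real m = real q powr \<epsilon>"
  shows "\<exists>g. g \<in> o(\<lambda>n. real n) \<and>
    (\<forall>n. real q powr ((1 + \<epsilon>) * n - g n) \<le> real (max_induced_matching (q ^ n) (m ^ n)))"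
proof -
  have "0 < real m"
    using assms(1,4) by simp
  then have "1 \<le> real (max_induced_matching (q ^ n) (m ^ n))" for n
    using assms(1) one_le_max_induced_matching[of "q ^ n" "m ^ n"] by simp
  show ?thesis
  proof (cases "q = 1")
    case True
    then show ?thesis
      using \<open>1 \<le> real (max_induced_matching _ _)\<close> by (intro exI[of _ "\<lambda>_. 0"]) simp
  next
    case False
    then have "1 < q"
      using assms(1) by simp
    have "1 < real m" "real m \<le> real q"
      using \<open>1 < q\<close> assms(2-4) powr_mono[of \<epsilon> 1 "real q"] by auto
    then have "2 \<le> m" "m \<le> q"
      by simp_all
    then show ?thesis
      using exists_little_o_exponent_loss[of "real q" "\<lambda>n. real (max_induced_matching (q ^ n) (m ^ n))" "1 + \<epsilon>"]
        eventually_max_induced_matching_ge[of m q \<epsilon>] \<open>1 < q\<close> assms(3,4) \<open>1 \<le> real (max_induced_matching _ _)\<close>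
      by auto
  qed
qed

theorem mainTheorem3:
  fixes q m :: nat and \<epsilon> :: real
  assumes "q > 0" and "0 < \<epsilon>" and "\<epsilon> \<le> 1"
    and "real m = real q powr \<epsilon>"
  shows "\<exists>g :: nat \<Rightarrow> real. g \<in> o(\<lambda>n. real n) \<and>
    (\<forall>n > 0. \<exists>A :: (nat \<times> nat) list \<Rightarrow> (nat \<times> nat) list \<Rightarrow> (nat \<times> nat) list \<Rightarrow> 'f::field.
       zeroing_out A (tensor_pow (mm_tensor q m q) n) \<and> independent_tensor A \<and>
       real (card (tensor_support A)) \<ge> real q powr ((1 + \<epsilon>) * real n - g n))"
proof -
  obtain g where "g \<in> o(\<lambda>n. real n)"
    "\<And>n. real q powr ((1 + \<epsilon>) * n - g n) \<le> real (max_induced_matching (q ^ n) (m ^ n))"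
    using exists_little_o_max_induced_matching[OF assms] by blast
  then show ?thesis
    using exists_independent_zeroing_out_max_induced_matching[where 'f = 'f, of q m] by metis
qed

end
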